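(* Let $(X,+)$ be an uncountable abelian Polish group with a complete metric $d$. Let $\mathcal I\subseteq\mathcal P(X)$ be a proper, translation-invariant $\sigma$-ideal containing singletons and having a Borel base, such that for every Borel set $B\notin\mathcal I$ and every family $\mathcal D\subseteq\mathcal I$ with $|\mathcal D|<\mathfrak c$ we have $|B\setminus\bigcup\mathcal D|=\mathfrak c$, and such that there is $a$ in the range of $d$, $a\neq0$, with $\{y\in X:d(x,y)=a\}\in\mathcal I$ for every $x\in X$. If $\kappa$ is a cardinal with $2^\kappa=\mathfrak c$, then there exists a family $\{B_\xi:\xi<\kappa\}$ of pairwise disjoint subsets of $X$ such that (1) every $B_\xi$ is completely $\mathcal I$-nonmeasurable, (2) no $B_\xi$ is a $2$-covering, and (3) $\{B_\xi:\xi<\kappa\}$ is a $\kappa$-S-covering.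
   Context: $\mathfrak c=|\mathbb R|$. A set $N\subseteq X$ is completely $\mathcal I$-nonmeasurable if for every Borel $A\notin\mathcal I$ both $A\cap N\notin\mathcal I$ and $A\setminus N\notin\mathcal I$. A set $A\subseteq X$ is a $2$-covering if for every $C\subseteq X$ with $|C|=2$ there is $x\in X$ with $C+x\subseteq A$. A family $\mathcal A$ of pairwise disjoint subsets of $X$ is a $\kappa$-S-covering if $|\mathcal A|=\kappa$ and for every $F\subseteq X$ with $|F|=\kappa$ there is $t\in X$ such that $F+t\subseteq\bigcup\mathcal A$ and $|(F+t)\cap A|=1$ for all $A\in\mathcal A$. *)

theory Defs
  imports "HOL-Analysis.Analysis"
begin

text \<open>Cardinalities are compared via the BNF cardinal library (card_of, ordLess, ordIso);
  the continuum c is the cardinality of UNIV :: real set.\<close>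

definition sigma_ideal :: "'a set set \<Rightarrow> bool" where
  "sigma_ideal I \<longleftrightarrow> {} \<in> I \<and> (\<forall>A B. A \<in> I \<and> B \<subseteq> A \<longrightarrow> B \<in> I)
     \<and> (\<forall>C. countable C \<and> C \<subseteq> I \<longrightarrow> \<Union>C \<in> I)"

definition translation_invariant :: "('a::ab_group_add) set set \<Rightarrow> bool" where
  "translation_invariant I \<longleftrightarrow> (\<forall>A \<in> I. \<forall>x. (\<lambda>y. y + x) ` A \<in> I)"

definition has_borel_base :: "('a::topological_space) set set \<Rightarrow> bool" where
  "has_borel_base I \<longleftrightarrow> (\<forall>A \<in> I. \<exists>B \<in> sets borel. A \<subseteq> B \<and> B \<in> I)"

definition completely_nonmeasurable :: "('a::topological_space) set set \<Rightarrow> 'a set \<Rightarrow> bool" where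
  "completely_nonmeasurable I N \<longleftrightarrow>
     (\<forall>A \<in> sets borel. A \<notin> I \<longrightarrow> A \<inter> N \<notin> I \<and> A - N \<notin> I)"

definition two_covering :: "('a::ab_group_add) set \<Rightarrow> bool" where
  "two_covering A \<longleftrightarrow> (\<forall>C. card C = 2 \<longrightarrow> (\<exists>x. (\<lambda>c. c + x) ` C \<subseteq> A))"

text \<open>kappa-S-covering, where the cardinal kappa is given as the cardinality of a set K.\<close>
definition S_covering :: "'k set \<Rightarrow> ('a::ab_group_add) set set \<Rightarrow> bool" where
  "S_covering K \<A> \<longleftrightarrow>
     disjoint \<A> \<and> ordIso2 (card_of \<A>) (card_of K) \<and>
     (\<forall>F. ordIso2 (card_of F) (card_of K) \<longrightarrow>
        (\<exists>t. (\<lambda>f. f + t) ` F \<subseteq> \<Union>\<A> \<and> (\<forall>A \<in> \<A>. card ((\<lambda>f. f + t) ` F \<inter> A) = 1)))"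

end

theory Submission
  imports Defs
begin

text \<open>Enumerate, in order type \<open>c\<close>, all tasks: the positive Borel sets (at most
  \<open>c\<close> many, as the Borel \<open>\<sigma>\<close>-algebra is countably generated) and the sets \<open>F\<close> with
  \<open>|F| = \<kappa>\<close> (at most \<open>c\<^sup>\<kappa> = 2\<^sup>\<kappa> = c\<close> many). At stage \<open>\<alpha>\<close> choose
  \<open>\<kappa>\<close> points \<open>H \<alpha> \<xi>\<close>, either inside the \<open>\<alpha>\<close>-th Borel set or forming a translate
  of the \<open>\<alpha>\<close>-th set \<open>F\<close>, none of which differs by \<open>0\<close> or \<open>\<plusminus>d\<close> from a point chosen
  earlier; fewer than \<open>c\<close> points are forbidden, so this is possible. The columns
  \<open>B \<xi> = {H \<alpha> \<xi> | \<alpha>}\<close> are then pairwise disjoint and each meets every positive Borel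
  set, hence they are completely nonmeasurable; no two points of a column differ by \<open>d\<close>,
  so none is a 2-covering; and every \<open>F\<close> of size \<open>\<kappa>\<close> has a translate, namely a row
  \<open>H \<alpha> ` K\<close>, meeting each column exactly once.\<close>

text \<open>Codes name all sets of the \<open>\<sigma>\<close>-algebra generated by a countable family; there are at
  most continuum many codes.\<close>

datatype code = Emp | Gen nat | Cmp code | Uni "nat \<Rightarrow> code"

primrec interp :: "'a set set \<Rightarrow> code \<Rightarrow> 'a set" where
  "interp G Emp = {}"
| "interp G (Gen n) = from_nat_into G n"
| "interp G (Cmp c) = - interp G c"
| "interp G (Uni f) = (\<Union>i. interp G (f i))"

lemma sigma_sets_subset_range_interp:
  assumes "countable G"
  shows "sigma_sets UNIV G \<subseteq> range (interp G)"
proof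
  fix S assume "S \<in> sigma_sets UNIV G"
  then show "S \<in> range (interp G)"
  proof induction
    case (Basic a)
    then show ?case using assms
      by (metis from_nat_into_to_nat_on interp.simps(2) rangeI)
  next
    case Empty
    show ?case by (metis interp.simps(1) rangeI)
  next
    case (Compl a)
    then obtain c where "a = interp G c" by auto
    then have "UNIV - a = interp G (Cmp c)" by auto
    then show ?case by (metis rangeI)
  next
    case (Union a)
    then have "\<forall>i. \<exists>c. a i = interp G c" by (metis image_iff)
    then obtain f where "\<And>i. a i = interp G (f i)" by metis
    then have "(\<Union>i. a i) = interp G (Uni f)" by auto
    then show ?case by (metis rangeI)
  qed
qed

text \<open>\<open>enc c l\<close> is the label of the node of the tree \<open>c\<close> reached along the path \<open>l\<close>, so a code
  is determined by \<open>enc c\<close>.\<close>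

primrec enc :: "code \<Rightarrow> nat list \<Rightarrow> nat" where
  "enc Emp = (\<lambda>l. 0)"
| "enc (Gen n) = (\<lambda>l. n + 3)"
| "enc (Cmp c) = (\<lambda>l. case l of [] \<Rightarrow> 1 | i # l' \<Rightarrow> enc c l')"
| "enc (Uni f) = (\<lambda>l. case l of [] \<Rightarrow> 2 | i # l' \<Rightarrow> enc (f i) l')"

lemma inj_enc: "inj enc"
proof
  fix c1 c2 :: code
  show "enc c1 = enc c2 \<Longrightarrow> c1 = c2"
  proof (induction c1 arbitrary: c2)
    case (Cmp c)
    note IH = Cmp.IH and eq = Cmp.prems
    show ?case
    proof (cases c2)
      case (Cmp d)
      with eq have "enc c l = enc d l" for l
        by (metis enc.simps(3) list.simps(5))
      with Cmp IH show ?thesis by (simp add: fun_eq_iff)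
    qed (use eq in \<open>auto dest!: fun_cong[where x="[]"]\<close>)
  next
    case (Uni f)
    note IH = Uni.IH and eq = Uni.prems
    show ?case
    proof (cases c2)
      case (Uni g)
      with eq have "enc (f i) l = enc (g i) l" for i l
        by (metis enc.simps(4) list.simps(5))
      with Uni IH show ?thesis by (simp add: fun_eq_iff)
    qed (use eq in \<open>auto dest!: fun_cong[where x="[]"]\<close>)
  qed (case_tac c2; auto dest!: fun_cong[where x="[]"])+
qed

unbundle cardinal_syntax

lemma card_of_code_le_Pow_nat: "|UNIV :: code set| \<le>o |Pow (UNIV :: nat set)|"
proof -
  define \<Phi> where "\<Phi> c = to_nat ` {(l, enc c l) | l. True}" for c
  have "inj \<Phi>"
  proof
    fix c1 c2 assume "\<Phi> c1 = \<Phi> c2"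
    then have "{(l, enc c1 l) | l. True} = {(l, enc c2 l) | l. True}"
      unfolding \<Phi>_def by (simp add: inj_image_eq_iff)
    then have "enc c1 = enc c2" by (auto simp: fun_eq_iff)
    then show "c1 = c2" using inj_enc by (simp add: inj_eq)
  qed
  then show ?thesis by (intro card_of_ordLeqI[of \<Phi>]) auto
qed

lemma card_of_Pow_nat_le_Pow:
  fixes K :: "'k set"
  assumes "infinite K"
  shows "|Pow (UNIV :: nat set)| \<le>o |Pow K|"
proof -
  obtain f :: "nat \<Rightarrow> 'k" where f: "inj f" "range f \<subseteq> K"
    using infinite_countable_subset[OF assms] by blast
  then have "inj (image f)" by (simp add: inj_on_def inj_image_eq_iff)
  with f(2) show ?thesis by (intro card_of_ordLeqI[of "image f"]) auto
qed

lemma card_of_sigma_sets_countable_le_Pow: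
  assumes "countable G" and "infinite K"
  shows "|sigma_sets UNIV G| \<le>o |Pow K|"
proof -
  have "|sigma_sets UNIV G| \<le>o |UNIV :: code set|"
    using sigma_sets_subset_range_interp[OF assms(1)] by (rule surj_imp_ordLeq)
  also have "|UNIV :: code set| \<le>o |Pow (UNIV :: nat set)|"
    by (rule card_of_code_le_Pow_nat)
  also have "|Pow (UNIV :: nat set)| \<le>o |Pow K|"
    using assms(2) by (rule card_of_Pow_nat_le_Pow)
  finally show ?thesis .
qed

lemma card_of_sets_borel_le_Pow:
  assumes "infinite K"
  shows "|sets (borel :: 'a::second_countable_topology measure)| \<le>o |Pow K|"
proof -
  obtain G :: "'a set set" where "countable G" "topological_basis G"
    using ex_countable_basis by blast
  then show ?thesis
    using card_of_sigma_sets_countable_le_Pow[OF _ assms] by (simp add: borel_eq_countable_basis)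
qed

lemma card_of_equipollent_subsets_le_Pow:
  fixes K :: "'k set"
  assumes K: "infinite K" and X: "|UNIV :: 'a set| =o |Pow K|"
  shows "|{F :: 'a set. |F| =o |K|}| \<le>o |Pow K|"
proof -
  obtain \<beta> :: "'a \<Rightarrow> 'k set" where \<beta>: "bij_betw \<beta> UNIV (Pow K)"
    using X card_of_ordIso by blast
  obtain p :: "'k \<times> 'k \<Rightarrow> 'k" where p: "bij_betw p (K \<times> K) K"
    using card_of_Times_same_infinite[OF K] card_of_ordIso by blast
  define e where "e F = (SOME e. bij_betw e K F)" for F :: "'a set"
  have e: "bij_betw (e F) K F" if "|F| =o |K|" for F
    unfolding e_def using that ordIso_symmetric card_of_ordIso by (metis someI_ex)
  define G where "G F = {(\<xi>, \<zeta>). \<xi> \<in> K \<and> \<zeta> \<in> \<beta> (e F \<xi>)}" for F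
  have G_sub: "G F \<subseteq> K \<times> K" for F
    using \<beta> unfolding G_def bij_betw_def by auto
  have "inj_on (\<lambda>F. p ` G F) {F. |F| =o |K|}"
  proof (rule inj_onI)
    fix F1 F2 assume F: "F1 \<in> {F. |F| =o |K|}" "F2 \<in> {F. |F| =o |K|}"
      and "p ` G F1 = p ` G F2"
    then have "G F1 = G F2"
      using G_sub p unfolding bij_betw_def by (meson inj_on_image_eq_iff)
    then have "\<beta> (e F1 \<xi>) = \<beta> (e F2 \<xi>)" if "\<xi> \<in> K" for \<xi>
      using that unfolding G_def set_eq_iff by auto
    then have "e F1 \<xi> = e F2 \<xi>" if "\<xi> \<in> K" for \<xi>
      using that \<beta> unfolding bij_betw_def inj_on_def by blast
    then have "e F1 ` K = e F2 ` K" by auto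
    then show "F1 = F2" using e F unfolding bij_betw_def by auto
  qed
  moreover have "p ` G F \<in> Pow K" for F
    using G_sub p unfolding bij_betw_def by auto
  ultimately show ?thesis by (intro card_of_ordLeqI) auto
qed

lemma card_of_Times_ordLess_infinite:
  assumes C: "infinite C" and "|A| <o |C|" and "|B| <o |C|"
  shows "|A \<times> B| <o |C|"
proof -
  let ?S = "A <+> B"
  have "|A \<times> B| \<le>o |?S \<times> ?S|"
    by (rule card_of_ordLeqI[of "\<lambda>(a, b). (Inl a, Inr b)"]) (auto simp: inj_on_def)
  moreover have "|?S \<times> ?S| <o |C|"
  proof (cases "finite ?S")
    case True
    then have "finite (?S \<times> ?S)" by blast
    with C show ?thesis
      using finite_ordLess_infinite[OF card_of_Well_order card_of_Well_order]
      by (simp add: Field_card_of)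
  next
    case False
    moreover have "|?S| <o |C|" using card_of_Plus_ordLess_infinite[OF C assms(2,3)] .
    ultimately show ?thesis using card_of_Times_same_infinite ordIso_ordLess_trans by blast
  qed
  ultimately show ?thesis using ordLeq_ordLess_trans by blast
qed

lemma inj_on_ex_only_preimage:
  assumes "inj_on g T" and "x\<^sub>0 \<in> T"
  shows "\<exists>x\<in>T. \<forall>x'\<in>T. g x' = y \<longrightarrow> x' = x"
  using assms unfolding inj_on_def by (cases "y \<in> g ` T") auto

lemma ex_transfinite_sequence:
  fixes r :: "'i rel" and K :: "'k set" and Good :: "'i \<Rightarrow> 'a set \<Rightarrow> ('k \<Rightarrow> 'a) \<Rightarrow> bool"
  assumes r: "Card_order r" "Field r = UNIV" "infinite (UNIV :: 'i set)"
    and K: "|K| <o r"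
    and step: "\<And>\<alpha> S. |S| <o r \<Longrightarrow> \<exists>h. Good \<alpha> S h"
  shows "\<exists>H. \<forall>\<alpha>. Good \<alpha> (\<Union>\<beta>\<in>underS r \<alpha>. H \<beta> ` K) (H \<alpha>)"
proof -
  define F where "F rec \<alpha> = (SOME h. Good \<alpha> (\<Union>\<beta>\<in>underS r \<alpha>. rec \<beta> ` K) h)" for rec \<alpha>
  define H where "H = wfrec (r - Id) F"
  have wf: "wf (r - Id)"
    using r(1) wo_rel.WF unfolding wo_rel_def card_order_on_def by blast
  have r_UNIV: "r =o |UNIV :: 'i set|"
    using card_of_Field_ordIso[OF r(1)] r(2) ordIso_symmetric by simp
  have "Good \<alpha> (\<Union>\<beta>\<in>underS r \<alpha>. H \<beta> ` K) (H \<alpha>)" for \<alpha>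
  proof -
    have "H \<alpha> = F (cut H (r - Id) \<alpha>) \<alpha>" unfolding H_def by (rule wfrec[OF wf])
    also have "\<dots> = F H \<alpha>"
      unfolding F_def by (intro arg_cong[where f = Eps] ext SUP_cong refl)
        (simp add: cut_apply underS_def)
    finally have H_eq: "H \<alpha> = (SOME h. Good \<alpha> (\<Union>\<beta>\<in>underS r \<alpha>. H \<beta> ` K) h)"
      unfolding F_def .
    have "(\<Union>\<beta>\<in>underS r \<alpha>. H \<beta> ` K) = (\<lambda>(\<beta>, \<xi>). H \<beta> \<xi>) ` (underS r \<alpha> \<times> K)"
      by auto
    then have "|\<Union>\<beta>\<in>underS r \<alpha>. H \<beta> ` K| \<le>o |underS r \<alpha> \<times> K|"
      by (metis card_of_image)
    also have "|underS r \<alpha> \<times> K| <o |UNIV :: 'i set|"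
    proof (rule card_of_Times_ordLess_infinite[OF r(3)])
      show "|underS r \<alpha>| <o |UNIV :: 'i set|"
        using card_of_underS[OF r(1)] r(2) r_UNIV ordLess_ordIso_trans by blast
      show "|K| <o |UNIV :: 'i set|" using K r_UNIV ordLess_ordIso_trans by blast
    qed
    also have "|UNIV :: 'i set| =o r" using r_UNIV ordIso_symmetric by blast
    finally show ?thesis unfolding H_eq by (rule someI_ex[OF step])
  qed
  then show ?thesis by blast
qed

definition large_positive_sets :: "'a::topological_space set set \<Rightarrow> bool" where
  "large_positive_sets I \<longleftrightarrow> (\<forall>B \<in> sets borel. B \<notin> I \<longrightarrow>
     (\<forall>\<D>. \<D> \<subseteq> I \<and> ( |\<D>| <o |UNIV :: real set| ) \<longrightarrow> ( |B - \<Union>\<D>| =o |UNIV :: real set| )))"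

lemma card_of_UNIV_if_large_positive_sets:
  fixes I :: "'a::topological_space set set"
  assumes "large_positive_sets I" and "UNIV \<notin> I"
  shows "|UNIV :: 'a set| =o |UNIV :: real set|"
proof -
  have "|{} :: 'a set set| <o |UNIV :: real set|"
    using card_of_ordLess[of "UNIV :: real set" "{} :: 'a set set"] by auto
  then have "|UNIV - \<Union>({} :: 'a set set)| =o |UNIV :: real set|"
    using assms(1)[unfolded large_positive_sets_def, rule_format, OF _ assms(2), of "{}"] by simp
  then show ?thesis by simp
qed

lemma ex_inj_into_positive_set_avoiding:
  fixes I :: "'a::topological_space set set" and K :: "'k set"
  assumes "large_positive_sets I" and "\<forall>x. {x} \<in> I"
    and "A \<in> sets borel" "A \<notin> I"
    and "|S| <o |UNIV :: real set|" and "|K| <o |UNIV :: real set|"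
  shows "\<exists>h. inj_on h K \<and> h ` K \<subseteq> A - S"
proof -
  have "(\<lambda>x. {x}) ` S \<subseteq> I" using assms(2) by auto
  moreover have "|(\<lambda>x. {x}) ` S| <o |UNIV :: real set|"
    using card_of_image assms(5) ordLeq_ordLess_trans by blast
  ultimately have "|A - \<Union>((\<lambda>x. {x}) ` S)| =o |UNIV :: real set|"
    using assms(1)[unfolded large_positive_sets_def, rule_format, OF assms(3,4)] by blast
  then have "|A - S| =o |UNIV :: real set|" by simp
  then have "|K| \<le>o |A - S|"
    using assms(6) ordLess_ordIso_trans ordIso_symmetric ordLess_imp_ordLeq by blast
  then show ?thesis using card_of_ordLeq by blast
qed

lemma not_in_ideal_if_meets_positive_Borel:
  assumes sigma: "sigma_ideal I" and base: "has_borel_base I"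
    and meets: "\<And>A. A \<in> sets borel \<Longrightarrow> A \<notin> I \<Longrightarrow> A \<inter> N \<noteq> {}"
    and A: "A \<in> sets borel" "A \<notin> I"
  shows "A \<inter> N \<notin> I"
proof
  assume "A \<inter> N \<in> I"
  then obtain C where C: "C \<in> sets borel" "A \<inter> N \<subseteq> C" "C \<in> I"
    using base unfolding has_borel_base_def by blast
  have "A - C \<notin> I"
  proof
    assume "A - C \<in> I"
    with C(3) have "{A - C, C} \<subseteq> I" by blast
    then have "\<Union>{A - C, C} \<in> I"
      using sigma unfolding sigma_ideal_def by (meson countable_empty countable_insert)
    moreover have "A \<subseteq> \<Union>{A - C, C}" by auto
    ultimately show False using A(2) sigma unfolding sigma_ideal_def by blast
  qed
  with A(1) C(1) have "(A - C) \<inter> N \<noteq> {}" by (intro meets) auto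
  with C(2) show False by blast
qed

lemma completely_nonmeasurable_if_disjoint_sets_meet_positive_Borel:
  assumes sigma: "sigma_ideal I" and base: "has_borel_base I" and "N \<inter> N' = {}"
    and meets: "\<And>A. A \<in> sets borel \<Longrightarrow> A \<notin> I \<Longrightarrow> A \<inter> N \<noteq> {} \<and> A \<inter> N' \<noteq> {}"
  shows "completely_nonmeasurable I N"
  unfolding completely_nonmeasurable_def
proof (intro ballI impI conjI)
  fix A :: "'a set" assume A: "A \<in> sets borel" "A \<notin> I"
  show "A \<inter> N \<notin> I" using not_in_ideal_if_meets_positive_Borel[OF sigma base _ A] meets by blast
  have "A \<inter> N' \<notin> I" using not_in_ideal_if_meets_positive_Borel[OF sigma base _ A] meets by blast
  moreover have "A \<inter> N' \<subseteq> A - N" using \<open>N \<inter> N' = {}\<close> by blast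
  ultimately show "A - N \<notin> I" using sigma unfolding sigma_ideal_def by blast
qed

lemma ex_translate_disjoint:
  fixes F S :: "'a::group_add set"
  assumes "infinite (UNIV :: 'a set)" and "|F| <o |UNIV :: 'a set|" and "|S| <o |UNIV :: 'a set|"
  shows "\<exists>t. (\<lambda>f. f + t) ` F \<inter> S = {}"
proof -
  let ?W = "(\<lambda>(s, f). - f + s) ` (S \<times> F)"
  have "|?W| <o |UNIV :: 'a set|"
    using card_of_image card_of_Times_ordLess_infinite[OF assms(1,3,2)] ordLeq_ordLess_trans by blast
  then have "?W \<noteq> UNIV" using ordLess_irreflexive by force
  then obtain t where t: "t \<notin> ?W" by blast
  have "f + t \<notin> S" if "f \<in> F" for f
  proof
    assume "f + t \<in> S"
    with that have "- f + (f + t) \<in> ?W" by force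
    with t show False by (simp add: add.assoc[symmetric])
  qed
  then show ?thesis by blast
qed

definition separated :: "'a::ab_group_add \<Rightarrow> 'k set \<Rightarrow> ('i \<Rightarrow> 'k \<Rightarrow> 'a) \<Rightarrow> bool" where
  "separated d K H \<longleftrightarrow> (\<forall>\<alpha>. inj_on (H \<alpha>) K) \<and>
     (\<forall>\<alpha> \<beta>. \<alpha> \<noteq> \<beta> \<longrightarrow> (\<forall>\<xi>\<in>K. \<forall>\<eta>\<in>K. H \<alpha> \<xi> - H \<beta> \<eta> \<notin> {- d, 0, d}))"

lemma separated_eq_iff:
  assumes "separated d K H" and "\<xi> \<in> K" and "\<eta> \<in> K"
  shows "H \<alpha> \<xi> = H \<beta> \<eta> \<longleftrightarrow> \<alpha> = \<beta> \<and> \<xi> = \<eta>"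
  using assms unfolding separated_def inj_on_def by force

lemma separated_columns_disjoint:
  assumes "separated d K H" and "\<xi> \<in> K" and "\<eta> \<in> K" and "\<xi> \<noteq> \<eta>"
  shows "range (\<lambda>\<alpha>. H \<alpha> \<xi>) \<inter> range (\<lambda>\<alpha>. H \<alpha> \<eta>) = {}"
  using separated_eq_iff[OF assms(1-3)] assms(4) by blast

lemma separated_row_Int_column:
  assumes "separated d K H" and "\<xi> \<in> K"
  shows "H \<alpha> ` K \<inter> range (\<lambda>\<beta>. H \<beta> \<xi>) = {H \<alpha> \<xi>}"
  using separated_eq_iff[OF assms(1) _ assms(2)] assms(2) by blast

lemma separated_column_not_two_covering:
  assumes "separated d K H" and "\<xi> \<in> K" and "d \<noteq> 0"
  shows "\<not> two_covering (range (\<lambda>\<alpha>. H \<alpha> \<xi>))"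
proof
  assume "two_covering (range (\<lambda>\<alpha>. H \<alpha> \<xi>))"
  moreover have "card {0, d} = 2" using assms(3) by simp
  ultimately obtain x where "(\<lambda>c. c + x) ` {0, d} \<subseteq> range (\<lambda>\<alpha>. H \<alpha> \<xi>)"
    unfolding two_covering_def by blast
  then obtain \<alpha> \<beta> where "x = H \<beta> \<xi>" and "d + x = H \<alpha> \<xi>" by auto
  then have "H \<alpha> \<xi> - H \<beta> \<xi> = d" by (metis add_diff_cancel)
  moreover from this have "\<alpha> \<noteq> \<beta>" using assms(3) by auto
  ultimately show False using assms(1,2) unfolding separated_def by blast
qed

lemma S_covering_columns:
  assumes sep: "separated d K H"
    and rows: "\<And>F. |F| =o |K| \<Longrightarrow> \<exists>\<alpha> t. H \<alpha> ` K = (\<lambda>f. f + t) ` F"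
  shows "S_covering K ((\<lambda>\<xi>. range (\<lambda>\<alpha>. H \<alpha> \<xi>)) ` K)"
  unfolding S_covering_def
proof (intro conjI allI impI)
  let ?B = "\<lambda>\<xi>. range (\<lambda>\<alpha>. H \<alpha> \<xi>)"
  show "disjoint (?B ` K)"
    unfolding disjoint_def using separated_columns_disjoint[OF sep] by blast
  have "inj_on ?B K"
    by (rule inj_onI) (use separated_eq_iff[OF sep] in blast)
  then have "bij_betw ?B K (?B ` K)" by (simp add: inj_on_imp_bij_betw)
  then show "|?B ` K| =o |K|" using card_of_ordIsoI ordIso_symmetric by blast
  fix F :: "'a set" assume "|F| =o |K|"
  then obtain \<alpha> t where row: "H \<alpha> ` K = (\<lambda>f. f + t) ` F" using rows by blast
  show "\<exists>t. (\<lambda>f. f + t) ` F \<subseteq> \<Union> (?B ` K) \<and> (\<forall>A\<in>?B ` K. card ((\<lambda>f. f + t) ` F \<inter> A) = 1)"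
  proof (intro exI conjI ballI)
    show "(\<lambda>f. f + t) ` F \<subseteq> \<Union> (?B ` K)" unfolding row[symmetric] by blast
    fix A assume "A \<in> ?B ` K"
    then obtain \<xi> where "\<xi> \<in> K" "A = ?B \<xi>" by blast
    then show "card ((\<lambda>f. f + t) ` F \<inter> A) = 1"
      unfolding row[symmetric] using separated_row_Int_column[OF sep] by simp
  qed
qed

lemma separated_if_fresh_wrt_predecessors:
  fixes r :: "'i rel" and H :: "'i \<Rightarrow> 'k \<Rightarrow> 'a::ab_group_add"
  assumes r: "Well_order r" "Field r = UNIV"
    and inj: "\<And>\<alpha>. inj_on (H \<alpha>) K"
    and fresh: "\<And>\<alpha> \<beta> \<xi> \<eta>. \<beta> \<in> underS r \<alpha> \<Longrightarrow> \<xi> \<in> K \<Longrightarrow> \<eta> \<in> K \<Longrightarrow>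
                   H \<alpha> \<xi> - H \<beta> \<eta> \<notin> {- d, 0, d}"
  shows "separated d K H"
  unfolding separated_def
proof (intro conjI allI impI ballI inj)
  fix \<alpha> \<beta> :: 'i and \<xi> \<eta> assume "\<alpha> \<noteq> \<beta>" "\<xi> \<in> K" "\<eta> \<in> K"
  have "total_on UNIV r" using r unfolding well_order_on_def linear_order_on_def by simp
  then have "(\<alpha>, \<beta>) \<in> r \<or> (\<beta>, \<alpha>) \<in> r" using \<open>\<alpha> \<noteq> \<beta>\<close> unfolding total_on_def by blast
  then consider "\<beta> \<in> underS r \<alpha>" | "\<alpha> \<in> underS r \<beta>"
    using \<open>\<alpha> \<noteq> \<beta>\<close> unfolding underS_def by blast
  then show "H \<alpha> \<xi> - H \<beta> \<eta> \<notin> {- d, 0, d}"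
  proof cases
    case 1
    then show ?thesis using fresh \<open>\<xi> \<in> K\<close> \<open>\<eta> \<in> K\<close> by blast
  next
    case 2
    have "- (H \<alpha> \<xi> - H \<beta> \<eta>) \<notin> {- d, 0, d}"
      unfolding minus_diff_eq using fresh[OF 2 \<open>\<eta> \<in> K\<close> \<open>\<xi> \<in> K\<close>] .
    then show ?thesis by (auto simp: minus_equation_iff equation_minus_iff)
  qed
qed

text \<open>A task is \<open>Inl A\<close>, asking for a row inside the positive Borel set \<open>A\<close>, or \<open>Inr F\<close>,
  asking for a row that is a translate of \<open>F\<close>.\<close>

definition realizes :: "'k set \<Rightarrow> 'a::plus set + 'a set \<Rightarrow> ('k \<Rightarrow> 'a) \<Rightarrow> bool" where
  "realizes K \<tau> h \<longleftrightarrow> case_sum (\<lambda>A. h ` K \<subseteq> A) (\<lambda>F. \<exists>t. h ` K = (\<lambda>f. f + t) ` F) \<tau>"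

lemma realizes_Inl [simp]: "realizes K (Inl A) h \<longleftrightarrow> h ` K \<subseteq> A"
  by (simp add: realizes_def)

lemma realizes_Inr [simp]: "realizes K (Inr F) h \<longleftrightarrow> (\<exists>t. h ` K = (\<lambda>f. f + t) ` F)"
  by (simp add: realizes_def)

lemma ex_row_realizing:
  fixes I :: "'a::{topological_space, group_add} set set" and K :: "'k set"
  assumes large: "large_positive_sets I" and singletons: "\<forall>x. {x} \<in> I"
    and X: "|UNIV :: 'a set| =o |UNIV :: real set|" and K: "|K| <o |UNIV :: real set|"
    and \<tau>: "\<tau> \<in> {A \<in> sets borel. A \<notin> I} <+> {F. |F| =o |K|}"
    and S: "|S| <o |UNIV :: real set|"
  shows "\<exists>h. inj_on h K \<and> h ` K \<inter> S = {} \<and> realizes K \<tau> h"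
proof (cases \<tau>)
  case (Inl A)
  with \<tau> have "A \<in> sets borel" "A \<notin> I" by auto
  then obtain h where "inj_on h K" "h ` K \<subseteq> A - S"
    using ex_inj_into_positive_set_avoiding[OF large singletons _ _ S K] by blast
  with Inl show ?thesis by auto
next
  case (Inr F)
  with \<tau> have "|F| =o |K|" by auto
  then obtain e where e: "bij_betw e K F"
    using card_of_ordIso ordIso_symmetric by blast
  have X_inf: "infinite (UNIV :: 'a set)"
    using card_of_ordIso_finite[OF X] infinite_UNIV_char_0 by blast
  have "|F| <o |UNIV :: 'a set|"
    using \<open>|F| =o |K|\<close> K X ordIso_ordLess_trans ordLess_ordIso_trans ordIso_symmetric by blast
  moreover have "|S| <o |UNIV :: 'a set|"
    using S X ordLess_ordIso_trans ordIso_symmetric by blast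
  ultimately obtain t where t: "(\<lambda>f. f + t) ` F \<inter> S = {}"
    using ex_translate_disjoint[OF X_inf] by blast
  have "(\<lambda>\<xi>. e \<xi> + t) ` K = (\<lambda>f. f + t) ` F"
    using e unfolding bij_betw_def by auto
  moreover have "inj_on (\<lambda>\<xi>. e \<xi> + t) K"
    using e unfolding bij_betw_def inj_on_def by auto
  ultimately show ?thesis using Inr t by auto
qed

definition neighbours :: "'a::ab_group_add \<Rightarrow> 'a set \<Rightarrow> 'a set" where
  "neighbours d S = (\<lambda>s. s - d) ` S \<union> S \<union> (\<lambda>s. s + d) ` S"

lemma not_in_neighbours_iff: "x \<notin> neighbours d S \<longleftrightarrow> (\<forall>s\<in>S. x - s \<notin> {- d, 0, d})"
  unfolding neighbours_def by (auto simp: algebra_simps)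

lemma card_of_neighbours_ordLess:
  assumes "infinite C" and "|S| <o |C|"
  shows "|neighbours d S| <o |C|"
  unfolding neighbours_def
  using assms card_of_image ordLeq_ordLess_trans by (metis card_of_Un_ordLess_infinite)

lemma card_of_tasks_le_continuum:
  fixes I :: "'a::second_countable_topology set set" and K :: "'k set"
  assumes X: "|UNIV :: 'a set| =o |UNIV :: real set|" and kappa: "|Pow K| =o |UNIV :: real set|"
  shows "|{A \<in> sets borel. A \<notin> I} <+> {F :: 'a set. |F| =o |K|}| \<le>o |UNIV :: real set|"
proof -
  have K_inf: "infinite K"
    using card_of_ordIso_finite[OF kappa] infinite_UNIV_char_0 by auto
  have "|{A \<in> sets borel. A \<notin> I} <+> {F :: 'a set. |F| =o |K|}| \<le>o |Pow K <+> Pow K|"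
  proof (rule card_of_Plus_mono)
    have "|{A \<in> sets borel. A \<notin> I}| \<le>o |sets (borel :: 'a measure)|"
      by (rule card_of_mono1) blast
    then show "|{A \<in> sets borel. A \<notin> I}| \<le>o |Pow K|"
      using card_of_sets_borel_le_Pow[OF K_inf] by (rule ordLeq_transitive)
    show "|{F :: 'a set. |F| =o |K|}| \<le>o |Pow K|"
      using card_of_equipollent_subsets_le_Pow[OF K_inf ordIso_transitive[OF X ordIso_symmetric[OF kappa]]] .
  qed
  also have "|Pow K <+> Pow K| =o |Pow K|"
    using K_inf by (intro card_of_Plus_infinite1 ordLeq_reflexive card_of_Well_order) simp
  also have "|Pow K| =o |UNIV :: real set|" using kappa .
  finally show ?thesis .
qed

lemma ex_separated_family:
  fixes I :: "'a::{second_countable_topology, ab_group_add} set set" and K :: "'k set" and d :: 'a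
  assumes large: "large_positive_sets I" and proper: "UNIV \<notin> I"
    and singletons: "\<forall>x. {x} \<in> I" and kappa: "|Pow K| =o |UNIV :: real set|"
  shows "\<exists>H :: real \<Rightarrow> 'k \<Rightarrow> 'a. separated d K H \<and>
           (\<forall>A \<in> sets borel. A \<notin> I \<longrightarrow> (\<exists>\<alpha>. H \<alpha> ` K \<subseteq> A)) \<and>
           (\<forall>F. |F| =o |K| \<longrightarrow> (\<exists>\<alpha> t. H \<alpha> ` K = (\<lambda>f. f + t) ` F))"
proof -
  let ?c = "|UNIV :: real set|"
  define T where "T = {A \<in> sets borel. A \<notin> I} <+> {F :: 'a set. |F| =o |K|}"
  have X: "|UNIV :: 'a set| =o ?c"
    using card_of_UNIV_if_large_positive_sets[OF large proper] .
  have K: "|K| <o ?c" using card_of_Pow kappa ordLess_ordIso_trans by blast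
  obtain g :: "'a set + 'a set \<Rightarrow> real" where g: "inj_on g T"
    using card_of_tasks_le_continuum[OF X kappa] unfolding T_def card_of_ordLeq[symmetric] by blast
  define Good where "Good \<alpha> S h \<longleftrightarrow> inj_on h K \<and> h ` K \<inter> neighbours d S = {} \<and>
      (\<forall>\<tau>\<in>T. g \<tau> = \<alpha> \<longrightarrow> realizes K \<tau> h)" for \<alpha> S h
  have "Inl UNIV \<in> T" unfolding T_def by (intro InlI) (simp add: proper)
  have "\<exists>h. Good \<alpha> S h" if S: "|S| <o ?c" for \<alpha> S
  proof -
    obtain \<tau> where \<tau>: "\<tau> \<in> T" and unique: "\<forall>\<tau>'\<in>T. g \<tau>' = \<alpha> \<longrightarrow> \<tau>' = \<tau>"
      using inj_on_ex_only_preimage[OF g \<open>Inl UNIV \<in> T\<close>] by blast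
    obtain h where "inj_on h K" "h ` K \<inter> neighbours d S = {}" "realizes K \<tau> h"
      using ex_row_realizing[OF large singletons X K \<tau>[unfolded T_def]]
        card_of_neighbours_ordLess[OF infinite_UNIV_char_0 S] by blast
    with unique show ?thesis unfolding Good_def by blast
  qed
  then obtain H where H: "\<And>\<alpha>. Good \<alpha> (\<Union>\<beta>\<in>underS ?c \<alpha>. H \<beta> ` K) (H \<alpha>)"
    using ex_transfinite_sequence[OF card_of_Card_order Field_card_of infinite_UNIV_char_0 K]
    by blast
  have H_inj: "inj_on (H \<alpha>) K"
    and H_fresh: "H \<alpha> ` K \<inter> neighbours d (\<Union>\<beta>\<in>underS ?c \<alpha>. H \<beta> ` K) = {}"
    and H_realizes: "\<tau> \<in> T \<Longrightarrow> realizes K \<tau> (H (g \<tau>))" for \<alpha> \<tau>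
    using H[of \<alpha>] H[of "g \<tau>"] unfolding Good_def by auto
  have "separated d K H"
  proof (rule separated_if_fresh_wrt_predecessors[OF card_of_Well_order Field_card_of H_inj])
    fix \<alpha> \<beta> \<xi> \<eta> assume "\<beta> \<in> underS ?c \<alpha>" and "\<xi> \<in> K" "\<eta> \<in> K"
    then show "H \<alpha> \<xi> - H \<beta> \<eta> \<notin> {- d, 0, d}"
      using H_fresh[of \<alpha>] unfolding disjoint_iff not_in_neighbours_iff by blast
  qed
  moreover have "\<exists>\<alpha>. H \<alpha> ` K \<subseteq> A" if "A \<in> sets borel" "A \<notin> I" for A
    using H_realizes[unfolded T_def, OF InlI, of A] that by auto
  moreover have "\<exists>\<alpha> t. H \<alpha> ` K = (\<lambda>f. f + t) ` F" if "|F| =o |K|" for F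
    using H_realizes[unfolded T_def, OF InrI, of F] that by auto
  ultimately show ?thesis by blast
qed

theorem mainTheorem11:
  fixes I :: "('a::{polish_space, ab_group_add, topological_group_add}) set set"
    and K :: "'k set"
  assumes uncountable: "uncountable (UNIV :: 'a set)"
    and proper: "UNIV \<notin> I"
    and sigma: "sigma_ideal I"
    and transl: "translation_invariant I"
    and singletons: "\<forall>x. {x} \<in> I"
    and base: "has_borel_base I"
    and large: "\<forall>B \<in> sets borel. B \<notin> I \<longrightarrow>
        (\<forall>\<D>. \<D> \<subseteq> I \<and> (card_of \<D>, card_of (UNIV :: real set)) \<in> ordLess \<longrightarrow>
           ordIso2 (card_of (B - \<Union>\<D>)) (card_of (UNIV :: real set)))"
    and sphere: "\<exists>a. a \<in> range (\<lambda>(x::'a, y::'a). dist x y) \<and> a \<noteq> 0 \<and>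
        (\<forall>x::'a. {y. dist x y = a} \<in> I)"
    and kappa: "ordIso2 (card_of (Pow K)) (card_of (UNIV :: real set))"
  shows "\<exists>B :: 'k \<Rightarrow> 'a set.
           (\<forall>\<xi>\<in>K. \<forall>\<eta>\<in>K. \<xi> \<noteq> \<eta> \<longrightarrow> B \<xi> \<inter> B \<eta> = {}) \<and>
           (\<forall>\<xi>\<in>K. completely_nonmeasurable I (B \<xi>)) \<and>
           (\<forall>\<xi>\<in>K. \<not> two_covering (B \<xi>)) \<and>
           S_covering K (B ` K)"
proof -
  obtain d :: 'a where "d \<noteq> 0"
    using uncountable by (metis countable_empty countable_insert UNIV_eq_I singletonI)
  have large': "large_positive_sets I"
    using large unfolding large_positive_sets_def .
  from ex_separated_family[OF large' proper singletons kappa, where d = d]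
  obtain H :: "real \<Rightarrow> 'k \<Rightarrow> 'a" where sep: "separated d K H"
    and meets: "\<forall>A \<in> sets borel. A \<notin> I \<longrightarrow> (\<exists>\<alpha>. H \<alpha> ` K \<subseteq> A)"
    and rows: "\<forall>F. |F| =o |K| \<longrightarrow> (\<exists>\<alpha> t. H \<alpha> ` K = (\<lambda>f. f + t) ` F)"
    by (elim exE conjE) (rule that)
  have column_meets: "A \<inter> range (\<lambda>\<alpha>. H \<alpha> \<zeta>) \<noteq> {}"
    if "A \<in> sets borel" "A \<notin> I" "\<zeta> \<in> K" for A \<zeta>
    using meets that by blast
  have K_inf: "infinite K"
    using card_of_ordIso_finite[OF kappa] infinite_UNIV_char_0 by auto
  show ?thesis
  proof (intro exI[of _ "\<lambda>\<xi>. range (\<lambda>\<alpha>. H \<alpha> \<xi>)"] conjI ballI impI)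
    fix \<xi> assume "\<xi> \<in> K"
    obtain \<eta> where "\<eta> \<in> K" "\<xi> \<noteq> \<eta>"
      using K_inf by (metis finite.emptyI finite_insert insert_iff subsetI finite_subset)
    show "completely_nonmeasurable I (range (\<lambda>\<alpha>. H \<alpha> \<xi>))"
      by (rule completely_nonmeasurable_if_disjoint_sets_meet_positive_Borel[OF sigma base
          separated_columns_disjoint[OF sep \<open>\<xi> \<in> K\<close> \<open>\<eta> \<in> K\<close> \<open>\<xi> \<noteq> \<eta>\<close>]])
        (use column_meets \<open>\<xi> \<in> K\<close> \<open>\<eta> \<in> K\<close> in blast)
    show "\<not> two_covering (range (\<lambda>\<alpha>. H \<alpha> \<xi>))"
      using separated_column_not_two_covering[OF sep \<open>\<xi> \<in> K\<close> \<open>d \<noteq> 0\<close>] .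
  qed (use separated_columns_disjoint[OF sep] S_covering_columns[OF sep rows[rule_format]] in auto)
qed

end
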